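(* For $1\le i<m+n$ and every $d\ge1$, as operators on $\mathbb V^{\otimes d}$, $$\rho_d(E_iK_i^{-1})=L(e_i)L(e_{i+1}^\ast)|_{\mathbb V^{\otimes d}}\qquad\text{and}\qquad \rho_d(K_iF_i)=L(e_{i+1})L(e_i^\ast)|_{\mathbb V^{\otimes d}}.$$
   Context: $q$ is an indeterminate, $m,n\ge1$, $[m+n]=\{1,\dots,m+n\}$. The Hecke algebra $\mathscr H_d$ is the $\mathbb C(q)$-algebra generated by $T_1,\dots,T_{d-1}$ with relations $(T_i-q)(T_i+q^{-1})=0$, $T_iT_{i+1}T_i=T_{i+1}T_iT_{i+1}$, $T_iT_j=T_jT_i$ ($|i-j|>1$); $T_w=T_{i_1}\cdots T_{i_k}$ for a reduced expression $w=s_{i_1}\cdots s_{i_k}\in\mathfrak S_d$; $\mathscr H_\infty$ is the inductive limit of $\mathscr H_0\subset\mathscr H_1\subset\cdots$, and $T\mapsto T^{\uparrow k}$ is the algebra endomorphism with $T_i^{\uparrow k}=T_{i+k}$. Parity: $\hat i=0$ if $i\le m$, $\hat i=1$ if $i>m$; $q_i=q^{(-1)^{\hat i}}$. $\gamma(i,j)=1$ if $i>j$ and $-1$ if $i\le j$. $\mathbb V$ is the $\mathbb C(q)$-vector space with basis $e_1,\dots,e_{m+n}$, $e_i$ of parity $\hat i$; $e_1^\ast,\dots,e_{m+n}^\ast$ is the dual basis. For $I=(i_d,\dots,i_1)\in[m+n]^d$, $e_I=e_{i_d}\otimes\cdots\otimes e_{i_1}$, written $e_{i_d}\cdots e_{i_1}$;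 $I.s_k$ is $I$ with the entries $i_k,i_{k+1}$ swapped. The right $\mathscr H_d$-action on $\mathbb V^{\otimes d}$: $e_I.T_k=(-1)^{\hat i_k\hat i_{k+1}}e_{I.s_k}$ if $i_k>i_{k+1}$; $=(-1)^{\hat i_k}q_{i_k}e_I$ if $i_k=i_{k+1}$; $=(-1)^{\hat i_k\hat i_{k+1}}e_{I.s_k}+(q-q^{-1})e_I$ if $i_k<i_{k+1}$. Set $\widetilde T_d(\mathbb V)=\mathbb V^{\otimes d}\otimes_{\mathscr H_d}\mathscr H_\infty$ (containing $\mathbb V^{\otimes d}$ as $\mathbb V^{\otimes d}\otimes1$), $\widetilde T(\mathbb V)=\bigoplus_{d\ge0}\widetilde T_d(\mathbb V)$, with product $(e_{j_k}\cdots e_{j_1}\otimes T_\tau)\cdot(e_{i_d}\cdots e_{i_1}\otimes T_\sigma)=e_{j_k}\cdots e_{j_1}e_{i_d}\cdots e_{i_1}\otimes T_\tau^{\uparrow d}T_\sigma$. For $\varphi\in\widetilde T(\mathbb V)$, $L(\varphi)$ is left multiplication by $\varphi$; $L(e_i)$ uses $e_i\otimes1\in\widetilde T_1(\mathbb V)$. For $j\in[m+n]$, $f_j(e_r)=q_j^{-\delta_{jr}}e_r$ and $g_j(e_r)=e_r\otimes T_1^{-\gamma(j,r)}\in\widetilde T_1(\mathbb V)$, and $L(e_j^\ast)=0$ on $\widetilde T_0(\mathbb V)$, $$L(e_j^\ast)(e_{i_d}\cdots e_{i_1}\otimes T_\sigma)=\sum_{k=1}^d(-1)^{\hat j(\hat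 i_d+\cdots+\hat i_{k+1})}\langle e_j^\ast,e_{i_k}\rangle\,g_j(e_{i_d})\cdots g_j(e_{i_{k+1}})f_j(e_{i_{k-1}})\cdots f_j(e_{i_1})\cdot T_\sigma$$ (product in $\widetilde T(\mathbb V)$). $U_q(\mathfrak{gl}(m|n))$ is the $\mathbb C(q)$-superalgebra generated by $E_i,F_i$ ($1\le i<m+n$) and $K_j^{\pm1}$ ($1\le j\le m+n$), with $E_m,F_m$ odd and all other generators even, subject to: $K_iK_j=K_jK_i$, $K_iK_i^{-1}=K_i^{-1}K_i=1$; $K_iE_j=q_i^{\delta_{ij}-\delta_{i,j+1}}E_jK_i$, $K_iF_j=q_i^{\delta_{i,j+1}-\delta_{ij}}F_jK_i$; $E_iF_j-(-1)^{\delta_{im}\delta_{jm}}F_jE_i=\delta_{ij}\frac{K_iK_{i+1}^{-1}-K_i^{-1}K_{i+1}}{q_i-q_i^{-1}}$; $E_iE_j=E_jE_i$, $F_iF_j=F_jF_i$ for $|i-j|>1$; $E_i^2E_j-(q_i+q_i^{-1})E_iE_jE_i+E_jE_i^2=0$ and $F_i^2F_j-(q_i+q_i^{-1})F_iF_jF_i+F_jF_i^2=0$ for $i\ne m$, $|i-j|=1$; $E_m^2=F_m^2=0$, $E_mE_{m-1,m+2}+E_{m-1,m+2}E_m=0$, $F_mF_{m-1,m+2}+F_{m-1,m+2}F_m=0$, where $E_{m-1,m+2}=E_{m-1}E_mE_{m+1}-q^{-1}E_{m-1}E_{m+1}E_m-qE_mE_{m+1}E_{m-1}+E_{m+1}E_mE_{m-1}$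 and $F_{m-1,m+2}$ is defined likewise with $F$'s. The comultiplication is $\Delta(K_i)=K_i\otimes K_i$, $\Delta(E_i)=1\otimes E_i+E_i\otimes K_iK_{i+1}^{-1}$, $\Delta(F_i)=F_i\otimes1+K_{i+1}K_i^{-1}\otimes F_i$; $\Delta^{(1)}=\Delta$, $\Delta^{(r)}=(\Delta\otimes\mathrm{id}^{\otimes r-1})\Delta^{(r-1)}$. $U_q(\mathfrak{gl}(m|n))$ acts on $\mathbb V$ by $K_ie_j=q_i^{\delta_{ij}}e_j$, $E_ie_j=\delta_{i+1,j}e_i$, $F_ie_j=\delta_{ij}e_{i+1}$, and on $\mathbb V^{\otimes d}$ via $\Delta^{(d-1)}$ using the sign rule $(x\otimes y)(v\otimes w)=(-1)^{|y||v|}xv\otimes yw$ for homogeneous $y,v$; this representation is denoted $\rho_d$. *)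

theory Defs
  imports Complex_Main "HOL-Computational_Algebra.Polynomial" "HOL-Computational_Algebra.Fraction_Field"
begin

type_synonym K = "complex poly fract"

definition qv :: K where "qv = Fract [:0, 1:] 1"

text \<open>Parity of an index and q_i (the parameter m is the even dimension).\<close>
definition par :: "nat \<Rightarrow> nat \<Rightarrow> nat" where
  "par m i = (if i \<le> m then 0 else 1)"

definition qi :: "nat \<Rightarrow> nat \<Rightarrow> K" where
  "qi m i = (if i \<le> m then qv else inverse qv)"

text \<open>Storage convention: a multi-index I = (i_d,...,i_1) is stored as the list
  [i_1, ..., i_d], i.e. I ! (k-1) = i_k.  A Hecke word [k_1,...,k_r] stands for
  T_{k_1} ... T_{k_r}.  An element of V^{\<otimes>d} is a formal linear combination
  (list of (coefficient, multi-index)); an element of the free space on the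
  symbols e_I \<otimes> (word) is a list of (coefficient, multi-index, word).\<close>

type_synonym vexpr = "(K \<times> nat list) list"
type_synonym texpr = "(K \<times> nat list \<times> nat list) list"

definition vec :: "texpr \<Rightarrow> (nat list \<times> nat list \<Rightarrow> K)" where
  "vec xs = (\<lambda>p. sum_list [c. (c, I, w) \<leftarrow> xs, (I, w) = p])"

text \<open>Right action of T_k (1 \<le> k < d) on a basis vector e_I of V^{\<otimes>d}.\<close>
definition act :: "nat \<Rightarrow> nat list \<Rightarrow> nat \<Rightarrow> vexpr" where
  "act m I k = (let a = I ! (k - 1); b = I ! k; J = I[k - 1 := b, k := a] in
     if a > b then [((-1) ^ (par m a * par m b), J)]
     else if a = b then [((-1) ^ (par m a) * qi m a, I)]
     else [((-1) ^ (par m a * par m b), J), (qv - inverse qv, I)])"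

definition HeckeRels :: "(K \<times> nat list) list set" where
  "HeckeRels =
     {[(1, [k, k]), (inverse qv, [k]), (- qv, [k]), (-1, [])] | k. 1 \<le> k}
   \<union> {[(1, [k, Suc k, k]), (-1, [Suc k, k, Suc k])] | k. 1 \<le> k}
   \<union> {[(1, [k, l]), (-1, [l, k])] | k l. 1 \<le> k \<and> 1 \<le> l \<and> (k + 1 < l \<or> l + 1 < k)}"

text \<open>The kernel of the presentation of
  \<Oplus>_d V^{\<otimes>d} \<otimes>_{H_d} H_\<infinity> as a quotient of the free space on symbols
  e_I \<otimes> (word): it is spanned by the Hecke relations inside H_\<infinity> and
  by the balancing relations (e_I . T_k) \<otimes> x - e_I \<otimes> T_k x.\<close>
inductive_set TRel :: "nat \<Rightarrow> nat \<Rightarrow> (nat list \<times> nat list \<Rightarrow> K) set" for m n where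
  zero: "(\<lambda>_. 0) \<in> TRel m n"
| add: "x \<in> TRel m n \<Longrightarrow> y \<in> TRel m n \<Longrightarrow> (\<lambda>p. x p + y p) \<in> TRel m n"
| smul: "x \<in> TRel m n \<Longrightarrow> (\<lambda>p. c * x p) \<in> TRel m n"
| hecke: "set I \<subseteq> {1..m + n} \<Longrightarrow> r \<in> HeckeRels \<Longrightarrow>
            vec [(c, I, a @ u @ b). (c, u) \<leftarrow> r] \<in> TRel m n"
| tens: "set I \<subseteq> {1..m + n} \<Longrightarrow> 1 \<le> k \<Longrightarrow> k < length I \<Longrightarrow>
            vec ([(c, J, w). (c, J) \<leftarrow> act m I k] @ [(-1, I, k # w)]) \<in> TRel m n"

definition teq :: "nat \<Rightarrow> nat \<Rightarrow> texpr \<Rightarrow> texpr \<Rightarrow> bool" where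
  "teq m n x y \<longleftrightarrow> (\<lambda>p. vec x p - vec y p) \<in> TRel m n"

text \<open>Product: (e_J \<otimes> T_\<tau>)(e_I \<otimes> T_\<sigma>) = e_J e_I \<otimes> T_\<tau>^{\<up>d} T_\<sigma>, d = length I.\<close>
definition tmul :: "texpr \<Rightarrow> texpr \<Rightarrow> texpr" where
  "tmul x y = [(c * c', I @ J, map (\<lambda>t. t + length I) w' @ w). (c, I, w) \<leftarrow> y, (c', J, w') \<leftarrow> x]"

definition emb :: "vexpr \<Rightarrow> texpr" where
  "emb v = [(c, I, []). (c, I) \<leftarrow> v]"

definition L_e :: "nat \<Rightarrow> texpr \<Rightarrow> texpr" where
  "L_e j x = tmul [(1, [j], [])] x"

text \<open>f_j(e_r) and g_j(e_r) in T~_1(V); T_1^{-1} = T_1 - (q - q^{-1}) in H_\<infinity>.\<close>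
definition fj :: "nat \<Rightarrow> nat \<Rightarrow> nat \<Rightarrow> texpr" where
  "fj m j r = [(if j = r then inverse (qi m j) else 1, [r], [])]"

definition gj :: "nat \<Rightarrow> nat \<Rightarrow> texpr" where
  "gj j r = (if j \<le> r then [(1, [r], [1])]
             else [(1, [r], [1]), (- (qv - inverse qv), [r], [])])"

definition L_dual_basis :: "nat \<Rightarrow> nat \<Rightarrow> nat list \<Rightarrow> nat list \<Rightarrow> texpr" where
  "L_dual_basis m j I \<sigma> = concat
     [ (if I ! (k - 1) = j then
          [((-1) ^ (par m j * sum_list (map (par m) (drop k I))) * c, J, w).
             (c, J, w) \<leftarrow> foldr tmul (rev (map (gj j) (drop k I)) @ rev (map (fj m j) (take (k - 1) I)))
                                  [(1, [], \<sigma>)]]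
        else []).
       k \<leftarrow> [1..<length I + 1]]"

definition L_dual :: "nat \<Rightarrow> nat \<Rightarrow> texpr \<Rightarrow> texpr" where
  "L_dual m j x = concat [[(c * c', J, w). (c', J, w) \<leftarrow> L_dual_basis m j I \<sigma>]. (c, I, \<sigma>) \<leftarrow> x]"

type_synonym vop = "nat \<Rightarrow> (K \<times> nat) list"

definition opE :: "nat \<Rightarrow> vop" where "opE i j = (if j = i + 1 then [(1, i)] else [])"
definition opF :: "nat \<Rightarrow> vop" where "opF i j = (if j = i then [(1, i + 1)] else [])"
definition opK :: "nat \<Rightarrow> nat \<Rightarrow> vop" where "opK m i j = [(if i = j then qi m i else 1, j)]"
definition opKinv :: "nat \<Rightarrow> nat \<Rightarrow> vop" where
  "opKinv m i j = [(if i = j then inverse (qi m i) else 1, j)]"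
definition opId :: vop where "opId j = [(1, j)]"
definition vcomp :: "vop \<Rightarrow> vop \<Rightarrow> vop" where
  "vcomp x y j = [(c * c', b'). (c, b) \<leftarrow> y j, (c', b') \<leftarrow> x b]"

text \<open>Action of a pure tensor x_d \<otimes> ... \<otimes> x_1 of operators (stored as [x_1,...,x_d],
  each with its parity) on e_I, with the super sign rule.\<close>
fun apply_pure :: "nat \<Rightarrow> (bool \<times> vop) list \<Rightarrow> nat list \<Rightarrow> vexpr" where
  "apply_pure m [] [] = [(1, [])]"
| "apply_pure m ((p, x) # ops) (a # I) =
     [((if p \<and> odd (sum_list (map (par m) I)) then -1 else 1) * c * c', b # J).
        (c, b) \<leftarrow> x a, (c', J) \<leftarrow> apply_pure m ops I]"
| "apply_pure m _ _ = []"

text \<open>Iterated coproducts \<Delta>^{(d-1)} of the generators, as sums of pure tensors.\<close>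
definition DeltaE :: "nat \<Rightarrow> nat \<Rightarrow> nat \<Rightarrow> (bool \<times> vop) list list" where
  "DeltaE m i d = [replicate k (False, vcomp (opK m i) (opKinv m (i + 1))) @ [(i = m, opE i)]
                   @ replicate (d - k - 1) (False, opId). k \<leftarrow> [0..<d]]"
definition DeltaF :: "nat \<Rightarrow> nat \<Rightarrow> nat \<Rightarrow> (bool \<times> vop) list list" where
  "DeltaF m i d = [replicate k (False, opId) @ [(i = m, opF i)]
                   @ replicate (d - k - 1) (False, vcomp (opK m (i + 1)) (opKinv m i)). k \<leftarrow> [0..<d]]"
definition DeltaK :: "nat \<Rightarrow> nat \<Rightarrow> nat \<Rightarrow> (bool \<times> vop) list list" where
  "DeltaK m i d = [replicate d (False, opK m i)]"
definition DeltaKinv :: "nat \<Rightarrow> nat \<Rightarrow> nat \<Rightarrow> (bool \<times> vop) list list" where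
  "DeltaKinv m i d = [replicate d (False, opKinv m i)]"

definition rho_tensors :: "nat \<Rightarrow> (bool \<times> vop) list list \<Rightarrow> vexpr \<Rightarrow> vexpr" where
  "rho_tensors m ts v = [(c * c', J). (c, I) \<leftarrow> v, t \<leftarrow> ts, (c', J) \<leftarrow> apply_pure m t I]"

definition rho_EKinv :: "nat \<Rightarrow> nat \<Rightarrow> nat \<Rightarrow> vexpr \<Rightarrow> vexpr" where
  "rho_EKinv m i d v = rho_tensors m (DeltaE m i d) (rho_tensors m (DeltaKinv m i d) v)"
definition rho_KF :: "nat \<Rightarrow> nat \<Rightarrow> nat \<Rightarrow> vexpr \<Rightarrow> vexpr" where
  "rho_KF m i d v = rho_tensors m (DeltaK m i d) (rho_tensors m (DeltaF m i d) v)"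

end

theory Submission
  imports Defs
begin

text \<open>Both sides are computed by induction on the degree, splitting off the top tensor factor.
  Every e_J \<otimes> T_w is rewritten into V^{\<otimes>d} by letting T_w act on e_J from the right, so an
  element of the tensor algebra is determined by the coefficient functions of its normal form.
  For a basis tensor e_{Ia}, the summand k = d + 1 of L(e_j^*) e_{Ia} is diagonal, and the
  remaining summands are g_j(e_a) times those of L(e_j^*) e_I; after multiplying by e_l, the
  factor g_j(e_a) acts on the two top tensor factors e_a e_l as T_{d+1}^{\<plusminus>1}. The iterated
  coproduct splits off the top factor in the same way, and the two recursions agree. For F_i
  one needs in addition that L(e_i) L(e_i^*) is diagonal on basis tensors.\<close>

section \<open>Equality in the tensor algebra\<close>

definition tscale :: "K \<Rightarrow> texpr \<Rightarrow> texpr" where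
  "tscale s X = map (\<lambda>(c, J, w). (s * c, J, w)) X"

lemma vec_Nil [simp]: "vec [] p = 0"
  by (simp add: vec_def)

lemma vec_Cons: "vec (x # xs) p = (if (fst (snd x), snd (snd x)) = p then fst x else 0) + vec xs p"
  by (cases x) (auto simp: vec_def)

lemma vec_append: "vec (xs @ ys) p = vec xs p + vec ys p"
  by (simp add: vec_def)

lemma vec_tscale: "vec (tscale s X) p = s * vec X p"
  by (induction X) (auto simp: tscale_def vec_Cons algebra_simps)

lemma teq_refl: "teq m n x x"
  unfolding teq_def using TRel.zero by simp

lemma teq_sym: "teq m n x y \<Longrightarrow> teq m n y x"
  unfolding teq_def using TRel.smul[of _ m n "-1"] by fastforce

lemma teq_trans: "teq m n x y \<Longrightarrow> teq m n y z \<Longrightarrow> teq m n x z"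
  unfolding teq_def using TRel.add by fastforce

lemma teq_append: "teq m n a b \<Longrightarrow> teq m n c d \<Longrightarrow> teq m n (a @ c) (b @ d)"
  unfolding teq_def using TRel.add[of "\<lambda>p. vec a p - vec b p" m n "\<lambda>p. vec c p - vec d p"]
  by (simp add: vec_append algebra_simps)

lemma teq_tscale: "teq m n a b \<Longrightarrow> teq m n (tscale s a) (tscale s b)"
  unfolding teq_def using TRel.smul[of "\<lambda>p. vec a p - vec b p" m n s]
  by (simp add: vec_tscale algebra_simps)

lemma teq_if_vec_eq: "(\<And>p. vec x p = vec y p) \<Longrightarrow> teq m n x y"
  unfolding teq_def using TRel.zero by simp

lemma teq_map_concat:
  "(\<And>x. x \<in> set xs \<Longrightarrow> teq m n [f x] (g x)) \<Longrightarrow> teq m n (map f xs) (concat (map g xs))"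
proof (induction xs)
  case Nil
  then show ?case by (simp add: teq_refl)
next
  case (Cons a xs)
  then show ?case using teq_append[of m n "[f a]" "g a" "map f xs"] by simp
qed

lemma teq_act:
  assumes "set I \<subseteq> {1..m + n}" "1 \<le> k" "k < length I"
  shows "teq m n [(c, I, k # w)] (map (\<lambda>(c', J). (c * c', J, w)) (act m I k))"
proof -
  have "vec (map (\<lambda>(c, J). (c, J, w)) (act m I k) @ [(- 1, I, k # w)]) =
      (\<lambda>p. vec (map (\<lambda>(c, J). (c, J, w)) (act m I k)) p - vec [(1, I, k # w)] p)"
    by (rule ext) (simp add: vec_append vec_Cons)
  then have "teq m n (map (\<lambda>(c, J). (c, J, w)) (act m I k)) [(1, I, k # w)]"
    using TRel.tens[OF assms, of w] unfolding teq_def by simp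
  from teq_tscale[OF teq_sym[OF this], of c] show ?thesis
    by (simp add: tscale_def case_prod_beta o_def split_def)
qed

section \<open>Normal forms in V^{\<otimes>d}\<close>

fun act_word :: "nat \<Rightarrow> nat list \<Rightarrow> nat list \<Rightarrow> vexpr" where
  "act_word m J [] = [(1, J)]"
| "act_word m J (k # w) =
     concat (map (\<lambda>(c, J'). map (\<lambda>(c', K). (c * c', K)) (act_word m J' w)) (act m J k))"

definition vcoeff :: "vexpr \<Rightarrow> nat list \<Rightarrow> K" where
  "vcoeff xs = (\<lambda>J. sum_list [c. (c, J') \<leftarrow> xs, J' = J])"

lemma vcoeff_Nil [simp]: "vcoeff [] J = 0"
  by (simp add: vcoeff_def)

lemma vcoeff_Cons [simp]: "vcoeff ((c, K) # xs) J = (if K = J then c else 0) + vcoeff xs J"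
  by (simp add: vcoeff_def)

lemma vcoeff_append [simp]: "vcoeff (xs @ ys) J = vcoeff xs J + vcoeff ys J"
  by (simp add: vcoeff_def)

lemma vcoeff_concat: "vcoeff (concat xss) J = sum_list (map (\<lambda>xs. vcoeff xs J) xss)"
  by (induction xss) auto

lemma vcoeff_concat_fun: "vcoeff (concat xss) = (\<lambda>J. sum_list (map (\<lambda>xs. vcoeff xs J) xss))"
  by (rule ext) (rule vcoeff_concat)

lemma vcoeff_scale: "vcoeff (map (\<lambda>(c', K). (c * c', K)) xs) J = c * vcoeff xs J"
  by (induction xs) (auto simp: algebra_simps)

lemma length_act: "(c, J) \<in> set (act m I k) \<Longrightarrow> length J = length I"
  by (auto simp: act_def Let_def split: if_splits)

lemma set_act_subset:
  assumes "(c, J) \<in> set (act m I k)" "1 \<le> k" "k < length I"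
  shows "set J \<subseteq> set I"
proof -
  have "I ! (k - 1) \<in> set I" "I ! k \<in> set I" using assms(2,3) by auto
  then have "set (I[k - 1 := I ! k, k := I ! (k - 1)]) \<subseteq> set I"
    using set_update_subset_insert[of "I[k - 1 := I ! k]" k "I ! (k - 1)"]
          set_update_subset_insert[of I "k - 1" "I ! k"] by auto
  then show ?thesis using assms(1) by (auto simp: act_def Let_def split: if_splits)
qed

lemma teq_act_word:
  assumes "set J \<subseteq> {1..m + n}" "\<forall>t \<in> set w. 1 \<le> t \<and> t < length J"
  shows "teq m n [(c, J, w)] (emb (map (\<lambda>(c', K). (c * c', K)) (act_word m J w)))"
  using assms
proof (induction w arbitrary: J c)
  case Nil
  then show ?case by (simp add: emb_def teq_refl)
next
  case (Cons k w)
  have first: "teq m n [(c, J, k # w)] (map (\<lambda>(c', J'). (c * c', J', w)) (act m J k))"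
    using Cons.prems by (intro teq_act) auto
  have rest: "teq m n (map (\<lambda>(c', J'). (c * c', J', w)) (act m J k))
      (concat (map (\<lambda>(c', J'). emb (map (\<lambda>(c'', K). (c * c' * c'', K)) (act_word m J' w)))
         (act m J k)))"
  proof (rule teq_map_concat)
    fix x assume x: "x \<in> set (act m J k)"
    obtain c' J' where xe: "x = (c', J')" by (cases x)
    have "length J' = length J" "set J' \<subseteq> set J"
      using length_act[of c' J' m J k] set_act_subset[of c' J' m J k] x xe Cons.prems by auto
    then have "teq m n [(c * c', J', w)] (emb (map (\<lambda>(c'', K). (c * c' * c'', K)) (act_word m J' w)))"
      using Cons.IH[of J' "c * c'"] Cons.prems by auto
    then show "teq m n [(\<lambda>(c', J'). (c * c', J', w)) x]
        ((\<lambda>(c', J'). emb (map (\<lambda>(c'', K). (c * c' * c'', K)) (act_word m J' w))) x)"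
      using xe by simp
  qed
  have "concat (map (\<lambda>(c', J'). emb (map (\<lambda>(c'', K). (c * c' * c'', K)) (act_word m J' w)))
      (act m J k)) = emb (map (\<lambda>(c', K). (c * c', K)) (act_word m J (k # w)))"
    by (simp add: emb_def map_concat o_def case_prod_beta mult.assoc split_def)
  then show ?case using teq_trans[OF first rest] by simp
qed

lemma vec_emb: "vec (emb v) (J, w) = (if w = [] then vcoeff v J else 0)"
  by (induction v) (auto simp: emb_def vec_Cons)

lemma teq_emb_if_vcoeff_eq: "(\<And>J. vcoeff a J = vcoeff b J) \<Longrightarrow> teq m n (emb a) (emb b)"
  by (rule teq_if_vec_eq) (auto simp: vec_emb)

definition normal_form :: "nat \<Rightarrow> texpr \<Rightarrow> vexpr" where
  "normal_form m x = concat (map (\<lambda>(c, J, w). map (\<lambda>(c', K). (c * c', K)) (act_word m J w)) x)"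

definition admissible :: "nat set \<Rightarrow> texpr \<Rightarrow> bool" where
  "admissible S x \<longleftrightarrow> (\<forall>(c, J, w) \<in> set x. set J \<subseteq> S \<and> (\<forall>t \<in> set w. 1 \<le> t \<and> t < length J))"

lemma teq_normal_form:
  assumes "admissible {1..m + n} x"
  shows "teq m n x (emb (normal_form m x))"
proof -
  have "teq m n (map (\<lambda>y. y) x)
      (concat (map (\<lambda>(c, J, w). emb (map (\<lambda>(c', K). (c * c', K)) (act_word m J w))) x))"
  proof (rule teq_map_concat)
    fix y assume "y \<in> set x"
    moreover obtain c J w where y: "y = (c, J, w)" by (cases y)
    ultimately have "set J \<subseteq> {1..m + n}" "\<forall>t \<in> set w. 1 \<le> t \<and> t < length J"
      using assms by (auto simp: admissible_def)
    then show "teq m n [y] ((\<lambda>(c, J, w). emb (map (\<lambda>(c', K). (c * c', K)) (act_word m J w))) y)"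
      using y by (simp add: teq_act_word)
  qed
  moreover have "concat (map (\<lambda>(c, J, w). emb (map (\<lambda>(c', K). (c * c', K)) (act_word m J w))) x)
      = emb (normal_form m x)"
    by (simp add: normal_form_def emb_def map_concat o_def case_prod_beta split_def)
  ultimately show ?thesis by simp
qed

lemma teq_emb_if_normal_form:
  assumes "admissible {1..m + n} x" "\<And>J. vcoeff (normal_form m x) J = vcoeff v J"
  shows "teq m n x (emb v)"
  using teq_trans[OF teq_normal_form[OF assms(1)] teq_emb_if_vcoeff_eq[OF assms(2)]] .

section \<open>Coefficients of L(e_l) after normalisation\<close>

text \<open>The coefficient function of f \<otimes> e_y; the last entry of a multi-index is the top factor.\<close>
definition tensor_top :: "nat \<Rightarrow> (nat list \<Rightarrow> K) \<Rightarrow> nat list \<Rightarrow> K" where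
  "tensor_top y f K0 = (if K0 \<noteq> [] \<and> last K0 = y then f (butlast K0) else 0)"

lemma tensor_top_add: "tensor_top y (\<lambda>K. f K + g K) K0 = tensor_top y f K0 + tensor_top y g K0"
  by (simp add: tensor_top_def)

lemma tensor_top_mult: "tensor_top y (\<lambda>K. c * f K) K0 = c * tensor_top y f K0"
  by (simp add: tensor_top_def)

lemma tensor_top_sum_list:
  "tensor_top a (\<lambda>K. sum_list (map (\<lambda>t. f t K) ts)) K0 = sum_list (map (\<lambda>t. tensor_top a (f t) K0) ts)"
  by (induction ts) (auto simp: tensor_top_def)

lemma tensor_top_delta:
  "tensor_top a (\<lambda>K. if K = I then c else 0) K0 = (if K0 = I @ [a] then c else 0)"
  by (cases K0 rule: rev_cases) (auto simp: tensor_top_def)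

lemma prod_list_mult_tensor_top:
  "prod_list (map f K0) * tensor_top a g K0 = f a * tensor_top a (\<lambda>K. prod_list (map f K) * g K) K0"
  by (cases K0 rule: rev_cases) (auto simp: tensor_top_def)

lemma vcoeff_map_snoc: "vcoeff (map (\<lambda>(c, K). (c, K @ [y])) xs) K0 = tensor_top y (vcoeff xs) K0"
proof (induction xs)
  case Nil
  then show ?case by (simp add: tensor_top_def)
next
  case (Cons a xs)
  obtain c K where a: "a = (c, K)" by (cases a)
  have "(K @ [y] = K0) = (K0 \<noteq> [] \<and> last K0 = y \<and> K = butlast K0)"
    by (cases K0 rule: rev_cases) auto
  then show ?case using Cons a by (auto simp: tensor_top_def)
qed

lemma act_snoc:
  assumes "k < length J"
  shows "act m (J @ [y]) k = map (\<lambda>(c, K). (c, K @ [y])) (act m J k)"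
proof -
  have "(J @ [y]) ! (k - 1) = J ! (k - 1)" "(J @ [y]) ! k = J ! k"
    "(J @ [y])[k - 1 := b, k := a] = J[k - 1 := b, k := a] @ [y]" for a b
    using assms by (auto simp: nth_append list_update_append)
  then show ?thesis unfolding act_def Let_def by simp
qed

lemma act_word_snoc:
  assumes "\<forall>t \<in> set w. t < length J"
  shows "act_word m (J @ [y]) w = map (\<lambda>(c, K). (c, K @ [y])) (act_word m J w)"
  using assms
proof (induction w arbitrary: J)
  case Nil
  then show ?case by simp
next
  case (Cons k w)
  have IH: "act_word m (J' @ [y]) w = map (\<lambda>(c, K). (c, K @ [y])) (act_word m J' w)"
    if "(c, J') \<in> set (act m J k)" for c J'
    using Cons length_act[OF that] by simp
  have "act_word m (J @ [y]) (k # w) = concat (map (\<lambda>(c, J'). map (\<lambda>(c', K). (c * c', K))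
      (act_word m J' w)) (map (\<lambda>(c, K). (c, K @ [y])) (act m J k)))"
    using Cons.prems by (simp add: act_snoc)
  also have "\<dots> = concat (map (\<lambda>(c, J'). map (\<lambda>(c', K). (c * c', K))
      (map (\<lambda>(c, K). (c, K @ [y])) (act_word m J' w))) (act m J k))"
    using IH by (auto intro!: arg_cong[where f = concat] map_cong)
  also have "\<dots> = map (\<lambda>(c, K). (c, K @ [y])) (act_word m J (k # w))"
    by (simp add: map_concat o_def case_prod_beta split_def)
  finally show ?case .
qed

definition top_coeff :: "nat \<Rightarrow> nat \<Rightarrow> texpr \<Rightarrow> nat list \<Rightarrow> K" where
  "top_coeff m l x K0 = sum_list (map (\<lambda>(c, J, w). c * vcoeff (act_word m (J @ [l]) w) K0) x)"

lemma top_coeff_Nil [simp]: "top_coeff m l [] K0 = 0"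
  by (simp add: top_coeff_def)

lemma top_coeff_Cons [simp]:
  "top_coeff m l ((c, J, w) # x) K0 = c * vcoeff (act_word m (J @ [l]) w) K0 + top_coeff m l x K0"
  by (simp add: top_coeff_def)

lemma top_coeff_append [simp]: "top_coeff m l (x @ y) K0 = top_coeff m l x K0 + top_coeff m l y K0"
  by (simp add: top_coeff_def)

lemma top_coeff_concat: "top_coeff m l (concat xs) K0 = sum_list (map (\<lambda>x. top_coeff m l x K0) xs)"
  by (induction xs) auto

lemma top_coeff_tscale [simp]: "top_coeff m l (tscale s x) K0 = s * top_coeff m l x K0"
  by (induction x) (auto simp: tscale_def algebra_simps)

lemma L_e_conv: "L_e l x = map (\<lambda>(c, J, w). (c, J @ [l], w)) x"
  by (induction x) (auto simp: L_e_def tmul_def)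

lemma vcoeff_normal_form_L_e: "vcoeff (normal_form m (L_e l x)) K0 = top_coeff m l x K0"
  by (induction x) (auto simp: normal_form_def L_e_conv vcoeff_concat vcoeff_scale)

text \<open>In degree d the words may involve T_d; they become admissible once L(e_l) puts one more
  factor on top.\<close>
definition word_bounded :: "texpr \<Rightarrow> bool" where
  "word_bounded X \<longleftrightarrow> (\<forall>(c, J, w) \<in> set X. \<forall>t \<in> set w. 1 \<le> t \<and> t \<le> length J)"

definition degree_one :: "texpr \<Rightarrow> bool" where
  "degree_one X \<longleftrightarrow> (\<forall>(c, J, w) \<in> set X. length J = 1 \<and> set w \<subseteq> {1})"

lemma word_bounded_tmul: "degree_one x \<Longrightarrow> word_bounded y \<Longrightarrow> word_bounded (tmul x y)"
  unfolding word_bounded_def degree_one_def tmul_def by fastforce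

lemma word_bounded_foldr_tmul:
  "(\<forall>x \<in> set xs. degree_one x) \<Longrightarrow> word_bounded y \<Longrightarrow> word_bounded (foldr tmul xs y)"
  by (induction xs) (auto intro: word_bounded_tmul)

lemma word_bounded_tscale: "word_bounded (tscale s X) = word_bounded X"
  by (auto simp: word_bounded_def tscale_def)

lemma word_bounded_concat: "(\<forall>x \<in> set xs. word_bounded x) \<Longrightarrow> word_bounded (concat xs)"
  by (auto simp: word_bounded_def)

lemma degree_one_gj: "degree_one (gj j r)"
  by (auto simp: degree_one_def gj_def)

lemma degree_one_fj: "degree_one (fj m j r)"
  by (auto simp: degree_one_def fj_def)

text \<open>The effect of T_{d+1} (followed by the correction turning it into T_{d+1}^{-1} when
  j > z) on the two top factors e_z e_l, expressed through the coefficient functions G x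
  of L(e_x) Y.\<close>
definition exchange_top ::
  "nat \<Rightarrow> nat \<Rightarrow> nat \<Rightarrow> nat \<Rightarrow> (nat \<Rightarrow> nat list \<Rightarrow> K) \<Rightarrow> nat list \<Rightarrow> K" where
  "exchange_top m j z l G K0 =
    (if l < z then (-1) ^ (par m z * par m l) * tensor_top z (G l) K0
     else if z = l then (-1) ^ (par m z) * qi m z * tensor_top l (G l) K0
     else (-1) ^ (par m z * par m l) * tensor_top z (G l) K0
       + (qv - inverse qv) * tensor_top l (G z) K0)
    - (if j \<le> z then 0 else (qv - inverse qv) * tensor_top l (G z) K0)"

lemma exchange_top_add:
  "exchange_top m j z l (\<lambda>x K. G1 x K + G2 x K) K0
    = exchange_top m j z l G1 K0 + exchange_top m j z l G2 K0"
  unfolding exchange_top_def tensor_top_add by (simp add: algebra_simps)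

lemma act_top_pair:
  "act m (I @ [z, l]) (Suc (length I)) =
    (if l < z then [((-1) ^ (par m z * par m l), I @ [l, z])]
     else if z = l then [((-1) ^ (par m z) * qi m z, I @ [z, l])]
     else [((-1) ^ (par m z * par m l), I @ [l, z]), (qv - inverse qv, I @ [z, l])])"
  by (simp add: act_def Let_def nth_append list_update_append)

lemma tmul_Nil [simp]: "tmul x [] = []"
  by (simp add: tmul_def)

lemma tmul_append: "tmul x (a @ b) = tmul x a @ tmul x b"
  by (simp add: tmul_def)

lemma tmul_concat: "tmul x (concat ys) = concat (map (tmul x) ys)"
  by (induction ys) (auto simp: tmul_append)

lemma tmul_tscale: "tmul x (tscale s y) = tscale s (tmul x y)"
  by (induction y) (auto simp: tmul_def tscale_def mult.assoc)

lemma top_coeff_tmul_gj_single: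
  assumes "\<forall>t \<in> set w. 1 \<le> t \<and> t \<le> length I"
  shows "top_coeff m l (tmul (gj j z) [(c, I, w)]) K0
    = exchange_top m j z l (\<lambda>x. top_coeff m x [(c, I, w)]) K0"
proof -
  have "\<forall>t \<in> set w. t < length (I @ [l])" "\<forall>t \<in> set w. t < length (I @ [z])"
    using assms by auto
  then have lz: "vcoeff (act_word m (I @ [l, z]) w) K0 = tensor_top z (vcoeff (act_word m (I @ [l]) w)) K0"
    and zl: "vcoeff (act_word m (I @ [z, l]) w) K0 = tensor_top l (vcoeff (act_word m (I @ [z]) w)) K0"
    using act_word_snoc[of w "I @ [l]" m z] act_word_snoc[of w "I @ [z]" m l]
    by (simp_all add: vcoeff_map_snoc)
  have swap: "vcoeff (act_word m (I @ [z, l]) (Suc (length I) # w)) K0 =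
     (if l < z then (-1) ^ (par m z * par m l) * vcoeff (act_word m (I @ [l, z]) w) K0
     else if z = l then (-1) ^ (par m z) * qi m z * vcoeff (act_word m (I @ [z, l]) w) K0
     else (-1) ^ (par m z * par m l) * vcoeff (act_word m (I @ [l, z]) w) K0
       + (qv - inverse qv) * vcoeff (act_word m (I @ [z, l]) w) K0)"
    by (simp add: act_top_pair vcoeff_concat vcoeff_scale)
  have lhs: "top_coeff m l (tmul (gj j z) [(c, I, w)]) K0
     = c * vcoeff (act_word m (I @ [z, l]) (Suc (length I) # w)) K0
     + (if j \<le> z then 0 else c * (inverse qv - qv) * vcoeff (act_word m (I @ [z, l]) w) K0)"
    by (simp add: tmul_def gj_def del: act_word.simps)
  show ?thesis
    unfolding lhs swap exchange_top_def top_coeff_Cons top_coeff_Nil using lz zl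
    by (cases "l < z"; cases "z = l"; cases "j \<le> z") (simp_all add: tensor_top_mult algebra_simps)
qed

lemma top_coeff_tmul_gj:
  assumes "word_bounded Y"
  shows "top_coeff m l (tmul (gj j z) Y) K0 = exchange_top m j z l (\<lambda>x. top_coeff m x Y) K0"
  using assms
proof (induction Y arbitrary: K0)
  case Nil
  then show ?case by (simp add: exchange_top_def tensor_top_def)
next
  case (Cons y Y)
  obtain c I w where y: "y = (c, I, w)" by (cases y)
  have wy: "\<forall>t \<in> set w. 1 \<le> t \<and> t \<le> length I" and wY: "word_bounded Y"
    using Cons.prems y by (auto simp: word_bounded_def)
  have split: "(\<lambda>x. top_coeff m x (y # Y)) = (\<lambda>x K. top_coeff m x [(c, I, w)] K + top_coeff m x Y K)"
    using y by (auto intro!: ext)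
  show ?case
    unfolding split exchange_top_add tmul_append[of _ "[y]" Y, simplified]
    by (simp only: top_coeff_append y top_coeff_tmul_gj_single[OF wy] Cons.IH[OF wY])
qed

definition wt_Kinv :: "nat \<Rightarrow> nat \<Rightarrow> nat \<Rightarrow> K" where
  "wt_Kinv m i r = (if i = r then inverse (qi m i) else 1)"

definition wt_K :: "nat \<Rightarrow> nat \<Rightarrow> nat \<Rightarrow> K" where
  "wt_K m i r = (if i = r then qi m i else 1)"

lemma foldr_tmul_fj:
  "foldr tmul (rev (map (fj m j) K')) [(1, [], [])] = [(prod_list (map (wt_Kinv m j) K'), K', [])]"
  by (induction K' rule: rev_induct) (simp_all add: tmul_def fj_def wt_Kinv_def)

definition L_dual_term :: "nat \<Rightarrow> nat \<Rightarrow> nat list \<Rightarrow> nat \<Rightarrow> texpr" where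
  "L_dual_term m j I k = (if I ! (k - 1) = j
     then tscale ((-1) ^ (par m j * sum_list (map (par m) (drop k I))))
       (foldr tmul (rev (map (gj j) (drop k I)) @ rev (map (fj m j) (take (k - 1) I))) [(1, [], [])])
     else [])"

lemma L_dual_basis_conv: "L_dual_basis m j I [] = concat (map (L_dual_term m j I) [1..<length I + 1])"
  unfolding L_dual_basis_def
  by (rule arg_cong[where f = concat], rule map_cong) (simp_all add: L_dual_term_def tscale_def)

lemma word_bounded_L_dual_basis: "word_bounded (L_dual_basis m j I [])"
proof -
  have "word_bounded (L_dual_term m j I k)" for k
    by (auto simp: L_dual_term_def word_bounded_tscale degree_one_gj degree_one_fj
        intro!: word_bounded_foldr_tmul) (auto simp: word_bounded_def)
  then show ?thesis unfolding L_dual_basis_conv by (simp add: word_bounded_concat)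
qed

lemma top_coeff_L_dual_term_snoc:
  assumes "1 \<le> k" "k \<le> length I"
  shows "top_coeff m l (L_dual_term m j (I @ [a]) k) K0
    = (-1) ^ (par m j * par m a) * top_coeff m l (tmul (gj j a) (L_dual_term m j I k)) K0"
proof -
  have "k - 1 < length I" using assms by simp
  then have "(I @ [a]) ! (k - 1) = I ! (k - 1)" "drop k (I @ [a]) = drop k I @ [a]"
    "take (k - 1) (I @ [a]) = take (k - 1) I"
    using assms by (simp_all add: nth_append)
  then show ?thesis
    unfolding L_dual_term_def by (simp add: tmul_tscale power_add algebra_simps)
qed

lemma top_coeff_L_dual_term_last:
  "top_coeff m l (L_dual_term m j (I @ [a]) (Suc (length I))) K0
    = (if a = j \<and> K0 = I @ [l] then prod_list (map (wt_Kinv m j) I) else 0)"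
  by (simp add: L_dual_term_def foldr_tmul_fj)

lemma top_coeff_L_dual_basis_snoc:
  "top_coeff m l (L_dual_basis m j (I @ [a]) []) K0 =
     (if a = j \<and> K0 = I @ [l] then prod_list (map (wt_Kinv m j) I) else 0)
     + (-1) ^ (par m j * par m a) * exchange_top m j a l (\<lambda>x. top_coeff m x (L_dual_basis m j I [])) K0"
proof -
  have upt_snoc: "[1..<length (I @ [a]) + 1] = [1..<length I + 1] @ [length I + 1]"
    by simp
  have "sum_list (map (\<lambda>k. top_coeff m l (L_dual_term m j (I @ [a]) k) K0) [1..<length I + 1]) =
      sum_list (map (\<lambda>k. (-1) ^ (par m j * par m a)
        * top_coeff m l (tmul (gj j a) (L_dual_term m j I k)) K0) [1..<length I + 1])"
    by (rule arg_cong[where f = sum_list], rule map_cong) (auto simp: top_coeff_L_dual_term_snoc)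
  then have "top_coeff m l (L_dual_basis m j (I @ [a]) []) K0 =
     (if a = j \<and> K0 = I @ [l] then prod_list (map (wt_Kinv m j) I) else 0)
     + (-1) ^ (par m j * par m a) * top_coeff m l (tmul (gj j a) (L_dual_basis m j I [])) K0"
    unfolding L_dual_basis_conv upt_snoc
    by (simp add: top_coeff_concat top_coeff_L_dual_term_last sum_list_const_mult tmul_concat o_def
        del: upt_Suc)
  then show ?thesis
    by (simp add: top_coeff_tmul_gj[OF word_bounded_L_dual_basis])
qed

section \<open>The coproduct side\<close>

definition pure_sign :: "nat \<Rightarrow> (bool \<times> vop) list \<Rightarrow> nat \<Rightarrow> K" where
  "pure_sign m ops a = prod_list (map (\<lambda>(p, x). if p \<and> odd (par m a) then -1 else 1) ops)"

lemma pure_sign_Cons: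
  "pure_sign m ((p, y) # ops) a = (if p \<and> odd (par m a) then -1 else 1) * pure_sign m ops a"
  by (simp add: pure_sign_def)

lemma pure_sign_replicate: "pure_sign m (replicate d (False, f)) a = 1"
  by (simp add: pure_sign_def)

lemma concat_concat: "concat (concat xss) = concat (map concat xss)"
  by (induction xss) auto

text \<open>Appending a factor at the top costs the sign of moving its vector past all odd operators.\<close>
lemma apply_pure_snoc:
  "length ops = length I \<Longrightarrow> apply_pure m (ops @ [(p, x)]) (I @ [a]) =
     concat (map (\<lambda>(c', J). map (\<lambda>(c, b). (pure_sign m ops a * c' * c, J @ [b])) (x a))
       (apply_pure m ops I))"
proof (induction ops I rule: list_induct2)
  case Nil
  then show ?case by (simp add: pure_sign_def split_def)
next
  case (Cons o1 ops a1 I)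
  obtain p1 y where o1: "o1 = (p1, y)" by (cases o1)
  have sign_add: "(if p1 \<and> odd (S + t) then - 1 else (1::K))
      = (if p1 \<and> odd S then -1 else 1) * (if p1 \<and> odd t then -1 else 1)"
    and sign_add': "(if p1 \<and> (even S = odd t) then - 1 else (1::K))
      = (if p1 \<and> odd S then -1 else 1) * (if p1 \<and> odd t then -1 else 1)" for S t :: nat
    by auto
  show ?case
    by (simp add: o1 Cons.IH pure_sign_Cons sign_add sign_add' map_concat concat_concat o_def
        split_def mult_ac split del: if_split)
qed

lemma apply_pure_replicate_diag:
  assumes "\<And>r. f r = [(dc r, r)]"
  shows "apply_pure m (replicate (length I) (False, f)) I = [(prod_list (map dc I), I)]"
  by (induction I) (auto simp: assms)

lemma length_apply_pure: "(c, J) \<in> set (apply_pure m ops I) \<Longrightarrow> length J = length I"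
  by (induction m ops I arbitrary: c J rule: apply_pure.induct) auto

lemma replicate_diff_snoc: "k < d \<Longrightarrow> replicate (d - k) x = replicate (d - Suc k) x @ [x]"
  by (metis Suc_diff_Suc replicate_Suc replicate_append_same)

lemma DeltaE_Suc: "DeltaE m i (Suc d) = map (\<lambda>t. t @ [(False, opId)]) (DeltaE m i d)
   @ [replicate d (False, vcomp (opK m i) (opKinv m (i + 1))) @ [(i = m, opE i)]]"
  unfolding DeltaE_def by (auto simp: replicate_diff_snoc intro!: map_cong)

lemma DeltaF_Suc:
  "DeltaF m i (Suc d) = map (\<lambda>t. t @ [(False, vcomp (opK m (i + 1)) (opKinv m i))]) (DeltaF m i d)
   @ [replicate d (False, opId) @ [(i = m, opF i)]]"
  unfolding DeltaF_def by (auto simp: replicate_diff_snoc intro!: map_cong)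

lemma length_DeltaE: "t \<in> set (DeltaE m i d) \<Longrightarrow> length t = d"
  by (auto simp: DeltaE_def)

lemma length_DeltaF: "t \<in> set (DeltaF m i d) \<Longrightarrow> length t = d"
  by (auto simp: DeltaF_def)

text \<open>The sign (-1)^{|e_a|} acquired when E_m or F_m, which are odd, passes e_a.\<close>
definition odd_sign :: "nat \<Rightarrow> nat \<Rightarrow> nat \<Rightarrow> K" where
  "odd_sign m i a = (if i = m \<and> odd (par m a) then -1 else 1)"

lemma pure_sign_DeltaE: "t \<in> set (DeltaE m i d) \<Longrightarrow> pure_sign m t a = odd_sign m i a"
  by (auto simp: DeltaE_def pure_sign_def odd_sign_def)

lemma pure_sign_DeltaF: "t \<in> set (DeltaF m i d) \<Longrightarrow> pure_sign m t a = odd_sign m i a"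
  by (auto simp: DeltaF_def pure_sign_def odd_sign_def)

definition rhoE :: "nat \<Rightarrow> nat \<Rightarrow> nat list \<Rightarrow> vexpr" where
  "rhoE m i I = concat (map (\<lambda>t. apply_pure m t I) (DeltaE m i (length I)))"

definition rhoF :: "nat \<Rightarrow> nat \<Rightarrow> nat list \<Rightarrow> vexpr" where
  "rhoF m i I = concat (map (\<lambda>t. apply_pure m t I) (DeltaF m i (length I)))"

text \<open>Eigenvalues of K_i K_{i+1}^{-1} and K_{i+1} K_i^{-1} on e_r.\<close>
definition wt_E :: "nat \<Rightarrow> nat \<Rightarrow> nat \<Rightarrow> K" where
  "wt_E m i r = (if i + 1 = r then inverse (qi m (i + 1)) else 1) * (if i = r then qi m i else 1)"

definition wt_F :: "nat \<Rightarrow> nat \<Rightarrow> nat \<Rightarrow> K" where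
  "wt_F m i r = (if i = r then inverse (qi m i) else 1) * (if i + 1 = r then qi m (i + 1) else 1)"

lemma vcomp_opK_opKinv_Suc: "vcomp (opK m i) (opKinv m (Suc i)) r = [(wt_E m i r, r)]"
  by (simp add: vcomp_def opK_def opKinv_def wt_E_def)

lemma vcomp_opK_Suc_opKinv: "vcomp (opK m (Suc i)) (opKinv m i) r = [(wt_F m i r, r)]"
  by (simp add: vcomp_def opK_def opKinv_def wt_F_def)

lemma vcoeff_concat_snoc:
  "vcoeff (concat (map (\<lambda>(c', J). [(s * c', J @ [a])]) X)) K0 = s * tensor_top a (vcoeff X) K0"
proof -
  have "concat (map (\<lambda>(c', J). [(s * c', J @ [a])]) X)
      = map (\<lambda>(c, K). (c, K @ [a])) (map (\<lambda>(c', K). (s * c', K)) X)"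
    by (induction X) auto
  moreover have "vcoeff (map (\<lambda>(c', K). (s * c', K)) X) = (\<lambda>K. s * vcoeff X K)"
    by (rule ext) (rule vcoeff_scale)
  ultimately show ?thesis
    by (metis (no_types) vcoeff_map_snoc tensor_top_mult)
qed

lemma vcoeff_rhoE_snoc:
  "vcoeff (rhoE m i (I @ [a])) K0 = odd_sign m i a * tensor_top a (vcoeff (rhoE m i I)) K0
     + (if a = i + 1 \<and> K0 = I @ [i] then prod_list (map (wt_E m i) I) else 0)"
proof -
  have "vcoeff (concat (map (\<lambda>t. apply_pure m t (I @ [a]))
      (map (\<lambda>t. t @ [(False, opId)]) (DeltaE m i (length I))))) K0
    = sum_list (map (\<lambda>t. odd_sign m i a * tensor_top a (vcoeff (apply_pure m t I)) K0)
      (DeltaE m i (length I)))"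
    unfolding vcoeff_concat map_map o_def
    by (rule arg_cong[where f = sum_list], rule map_cong)
      (auto simp: apply_pure_snoc length_DeltaE pure_sign_DeltaE opId_def vcoeff_concat_snoc)
  also have "\<dots> = odd_sign m i a * tensor_top a (vcoeff (rhoE m i I)) K0"
    by (simp add: rhoE_def vcoeff_concat_fun tensor_top_sum_list sum_list_const_mult o_def)
  finally have lower: "vcoeff (concat (map (\<lambda>t. apply_pure m t (I @ [a]))
      (map (\<lambda>t. t @ [(False, opId)]) (DeltaE m i (length I))))) K0
    = odd_sign m i a * tensor_top a (vcoeff (rhoE m i I)) K0" .
  have top: "apply_pure m (replicate (length I) (False, vcomp (opK m i) (opKinv m (Suc i)))
      @ [(i = m, opE i)]) (I @ [a])
     = (if a = i + 1 then [(prod_list (map (wt_E m i) I), I @ [i])] else [])"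
    by (simp add: apply_pure_snoc apply_pure_replicate_diag[of _ "wt_E m i"]
        vcomp_opK_opKinv_Suc pure_sign_replicate opE_def)
  show ?thesis
    unfolding rhoE_def length_append_singleton DeltaE_Suc
    using lower by (auto simp: rhoE_def top)
qed

lemma vcoeff_rhoF_snoc:
  "vcoeff (rhoF m i (I @ [a])) K0 = odd_sign m i a * wt_F m i a * tensor_top a (vcoeff (rhoF m i I)) K0
     + (if a = i \<and> K0 = I @ [i + 1] then 1 else 0)"
proof -
  have snoc_weighted: "vcoeff (concat (map (\<lambda>(c', J). [(odd_sign m i a * c' * wt_F m i a, J @ [a])]) X)) K0
      = odd_sign m i a * wt_F m i a * tensor_top a (vcoeff X) K0" for X
    using vcoeff_concat_snoc[of "odd_sign m i a * wt_F m i a" a X K0] by (simp add: mult_ac)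
  have "vcoeff (concat (map (\<lambda>t. apply_pure m t (I @ [a]))
      (map (\<lambda>t. t @ [(False, vcomp (opK m (i + 1)) (opKinv m i))]) (DeltaF m i (length I))))) K0
    = sum_list (map (\<lambda>t. odd_sign m i a * wt_F m i a * tensor_top a (vcoeff (apply_pure m t I)) K0)
      (DeltaF m i (length I)))"
    unfolding vcoeff_concat map_map o_def
    by (rule arg_cong[where f = sum_list], rule map_cong)
      (auto simp: apply_pure_snoc length_DeltaF pure_sign_DeltaF vcomp_opK_Suc_opKinv
        snoc_weighted)
  also have "\<dots> = odd_sign m i a * wt_F m i a * tensor_top a (vcoeff (rhoF m i I)) K0"
    by (simp add: rhoF_def vcoeff_concat_fun tensor_top_sum_list sum_list_const_mult o_def)
  finally have lower: "vcoeff (concat (map (\<lambda>t. apply_pure m t (I @ [a]))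
      (map (\<lambda>t. t @ [(False, vcomp (opK m (i + 1)) (opKinv m i))]) (DeltaF m i (length I))))) K0
    = odd_sign m i a * wt_F m i a * tensor_top a (vcoeff (rhoF m i I)) K0" .
  have top: "apply_pure m (replicate (length I) (False, opId) @ [(i = m, opF i)]) (I @ [a])
     = (if a = i then [(1, I @ [i + 1])] else [])"
    by (simp add: apply_pure_snoc apply_pure_replicate_diag[of _ "\<lambda>_. 1"] opId_def
        pure_sign_replicate opF_def map_replicate_const)
  show ?thesis
    unfolding rhoF_def length_append_singleton DeltaF_Suc
    using lower by (auto simp: rhoF_def top)
qed

section \<open>Comparison of the two recursions\<close>

lemma qv_nonzero: "qv \<noteq> 0"
  by (simp add: qv_def Zero_fract_def eq_fract)

lemma qi_nonzero: "qi m x \<noteq> 0"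
  using qv_nonzero by (simp add: qi_def)

lemma par_mult_self: "par m i * par m i = par m i"
  by (simp add: par_def)

text \<open>par m (i + 1) = par m i unless i = m, where the parity jumps from even to odd.\<close>
lemma neg_one_pow_par_Suc:
  "(-1::K) ^ (par m (Suc i) * par m a) * (-1) ^ (par m i * par m a) = odd_sign m i a"
  by (auto simp: par_def odd_sign_def)

lemma neg_one_pow_par_q_diff: "(-1) ^ par m i * (qv - inverse qv) = qi m i - inverse (qi m i)"
  by (auto simp: par_def qi_def)

lemma prod_wt_Kinv_Suc:
  "prod_list (map (wt_Kinv m (Suc i)) I) = prod_list (map (wt_Kinv m i) I) * prod_list (map (wt_E m i) I)"
  by (induction I) (auto simp: wt_Kinv_def wt_E_def qi_nonzero)

lemma top_coeff_L_dual_basis_E: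
  "top_coeff m i (L_dual_basis m (Suc i) I []) K0 = prod_list (map (wt_Kinv m i) I) * vcoeff (rhoE m i I) K0"
proof (induction I arbitrary: K0 rule: rev_induct)
  case Nil
  then show ?case by (simp add: L_dual_basis_def rhoE_def DeltaE_def)
next
  case (snoc a I)
  have IH: "top_coeff m x (L_dual_basis m (Suc i) I [])
      = (\<lambda>K. prod_list (map (wt_Kinv m i) I) * vcoeff (rhoE m i I) K)" if "x = i" for x
    using snoc.IH that by (intro ext) simp
  have lhs: "top_coeff m i (L_dual_basis m (Suc i) (I @ [a]) []) K0 =
     (if a = Suc i \<and> K0 = I @ [i] then prod_list (map (wt_Kinv m (Suc i)) I) else 0)
     + (-1) ^ (par m (Suc i) * par m a)
       * exchange_top m (Suc i) a i (\<lambda>x. top_coeff m x (L_dual_basis m (Suc i) I [])) K0"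
    using top_coeff_L_dual_basis_snoc[of m i "Suc i" I a K0] by simp
  have rhs: "prod_list (map (wt_Kinv m i) (I @ [a])) * vcoeff (rhoE m i (I @ [a])) K0 =
     wt_Kinv m i a * odd_sign m i a * (prod_list (map (wt_Kinv m i) I) * tensor_top a (vcoeff (rhoE m i I)) K0)
     + (if a = Suc i \<and> K0 = I @ [i]
        then prod_list (map (wt_Kinv m i) I) * prod_list (map (wt_E m i) I) else 0)"
    by (simp add: vcoeff_rhoE_snoc wt_Kinv_def algebra_simps)
  consider "a < i" | "a = i" | "a = Suc i" | "Suc i < a" by linarith
  then show ?case
  proof cases
    case 2
    \<comment> \<open>On the top pair e_i e_i the factor g_{i+1}(e_i) acts by T^{-1}, with eigenvalue q_i^{-1}.\<close>
    have hecke_inverse: "(-1::K) ^ (par m (Suc i) * par m i) * ((-1) ^ (par m i) * qi m i - (qv - inverse qv))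
        = inverse (qi m i) * odd_sign m i i"
      by (auto simp: par_def odd_sign_def qi_def)
    from 2 show ?thesis unfolding lhs rhs exchange_top_def IH[OF 2] IH[OF refl] tensor_top_mult
      using arg_cong[OF hecke_inverse,
          of "\<lambda>t. t * (prod_list (map (wt_Kinv m i) I) * tensor_top i (vcoeff (rhoE m i I)) K0)"]
      by (simp add: wt_Kinv_def algebra_simps)
  qed (unfold lhs rhs exchange_top_def IH[OF refl] tensor_top_mult,
    use neg_one_pow_par_Suc[of m i a] in \<open>simp_all add: wt_Kinv_def prod_wt_Kinv_Suc algebra_simps\<close>)
qed

lemma top_coeff_L_dual_basis_diag_snoc:
  assumes "top_coeff m i (L_dual_basis m i I []) = (\<lambda>K. if K = I then c else 0)"
  shows "top_coeff m i (L_dual_basis m i (I @ [a]) []) K0 = (if K0 = I @ [a]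
    then (if a = i then prod_list (map (wt_Kinv m i) I) + qi m i * c else c) else 0)"
proof -
  have lhs: "top_coeff m i (L_dual_basis m i (I @ [a]) []) K0 =
     (if a = i \<and> K0 = I @ [i] then prod_list (map (wt_Kinv m i) I) else 0)
     + (-1) ^ (par m i * par m a) * exchange_top m i a i (\<lambda>x. top_coeff m x (L_dual_basis m i I [])) K0"
    using top_coeff_L_dual_basis_snoc[of m i i I a K0] by simp
  have "(-1::K) ^ (par m i * par m a) * (-1) ^ (par m a * par m i) = 1"
    "(-1::K) ^ (par m i * par m i) * ((-1) ^ par m i * qi m i) = qi m i"
    by (auto simp: par_def)
  then show ?thesis
    unfolding lhs exchange_top_def assms tensor_top_delta
    by (cases "a = i") (auto simp: algebra_simps)
qed

lemma top_coeff_L_dual_basis_diag: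
  "\<exists>c. top_coeff m i (L_dual_basis m i I []) = (\<lambda>K. if K = I then c else 0)
     \<and> prod_list (map (wt_Kinv m i) I) + (qi m i - inverse (qi m i)) * c = prod_list (map (wt_K m i) I)"
proof (induction I rule: rev_induct)
  case Nil
  show ?case by (rule exI[of _ 0]) (simp add: L_dual_basis_def fun_eq_iff)
next
  case (snoc a I)
  then obtain c where IH: "top_coeff m i (L_dual_basis m i I []) = (\<lambda>K. if K = I then c else 0)"
    and c: "prod_list (map (wt_Kinv m i) I) + (qi m i - inverse (qi m i)) * c = prod_list (map (wt_K m i) I)"
    by blast
  let ?P = "prod_list (map (wt_Kinv m i) I)" and ?q = "qi m i"
  define c' where "c' = (if a = i then ?P + ?q * c else c)"
  have "top_coeff m i (L_dual_basis m i (I @ [a]) []) = (\<lambda>K. if K = I @ [a] then c' else 0)"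
    using top_coeff_L_dual_basis_diag_snoc[OF IH] by (auto simp: c'_def)
  moreover have "prod_list (map (wt_Kinv m i) (I @ [a])) + (?q - inverse ?q) * c'
      = prod_list (map (wt_K m i) (I @ [a]))"
  proof (cases "a = i")
    case True
    have "?P * inverse ?q + (?q - inverse ?q) * (?P + ?q * c) = (?P + (?q - inverse ?q) * c) * ?q"
      by (simp add: algebra_simps)
    then show ?thesis using True c by (simp add: c'_def wt_Kinv_def wt_K_def)
  next
    case False
    then show ?thesis using c by (simp add: c'_def wt_Kinv_def wt_K_def)
  qed
  ultimately show ?case by blast
qed

lemma wt_K_vcoeff_rhoF_snoc:
  "prod_list (map (wt_K m i) K0) * vcoeff (rhoF m i (I @ [a])) K0 =
    wt_K m i a * odd_sign m i a * wt_F m i a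
      * tensor_top a (\<lambda>K. prod_list (map (wt_K m i) K) * vcoeff (rhoF m i I) K) K0
    + (if a = i \<and> K0 = I @ [Suc i] then prod_list (map (wt_K m i) I) else 0)"
proof -
  have "prod_list (map (wt_K m i) K0) * vcoeff (rhoF m i (I @ [a])) K0 =
      odd_sign m i a * wt_F m i a * (prod_list (map (wt_K m i) K0) * tensor_top a (vcoeff (rhoF m i I)) K0)
      + (if a = i \<and> K0 = I @ [Suc i] then prod_list (map (wt_K m i) K0) else 0)"
    by (simp add: vcoeff_rhoF_snoc algebra_simps)
  then show ?thesis
    unfolding prod_list_mult_tensor_top by (auto simp: wt_K_def)
qed

lemma top_coeff_L_dual_basis_F:
  "top_coeff m (Suc i) (L_dual_basis m i I []) K0 = prod_list (map (wt_K m i) K0) * vcoeff (rhoF m i I) K0"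
proof (induction I arbitrary: K0 rule: rev_induct)
  case Nil
  then show ?case by (simp add: L_dual_basis_def rhoF_def DeltaF_def)
next
  case (snoc a I)
  obtain c where diag: "top_coeff m i (L_dual_basis m i I []) = (\<lambda>K. if K = I then c else 0)"
    and c: "prod_list (map (wt_Kinv m i) I) + (qi m i - inverse (qi m i)) * c = prod_list (map (wt_K m i) I)"
    using top_coeff_L_dual_basis_diag[of m i I] by blast
  have IH: "top_coeff m (Suc i) (L_dual_basis m i I [])
      = (\<lambda>K. prod_list (map (wt_K m i) K) * vcoeff (rhoF m i I) K)"
    using snoc.IH by (intro ext) simp
  have lhs: "top_coeff m (Suc i) (L_dual_basis m i (I @ [a]) []) K0 =
     (if a = i \<and> K0 = I @ [Suc i] then prod_list (map (wt_Kinv m i) I) else 0)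
     + (-1) ^ (par m i * par m a) * exchange_top m i a (Suc i) (\<lambda>x. top_coeff m x (L_dual_basis m i I [])) K0"
    using top_coeff_L_dual_basis_snoc[of m "Suc i" i I a K0] by simp
  consider "a < i" | "a = i" | "a = Suc i" | "Suc i < a" by linarith
  then show ?case
  proof cases
    case 2
    have c': "prod_list (map (wt_Kinv m i) I) + (-1) ^ (par m i * par m i) * ((qv - inverse qv) * c)
        = prod_list (map (wt_K m i) I)"
      unfolding par_mult_self mult.assoc[symmetric] neg_one_pow_par_q_diff by (rule c)
    have sign: "(-1::K) ^ (par m i * par m i) * (-1) ^ (par m i * par m (Suc i))
        = odd_sign m i i * (wt_K m i i * wt_F m i i)"
      using qi_nonzero[of m i] by (auto simp: par_def odd_sign_def wt_K_def wt_F_def)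
    have diag_a: "top_coeff m a (L_dual_basis m i I []) = (\<lambda>K. if K = I then c else 0)"
      using diag 2 by simp
    from 2 show ?thesis unfolding lhs wt_K_vcoeff_rhoF_snoc exchange_top_def IH diag_a tensor_top_delta
      using arg_cong[OF sign,
          of "\<lambda>t. t * tensor_top i (\<lambda>K. prod_list (map (wt_K m i) K) * vcoeff (rhoF m i I) K) K0"] c'
      by (cases "K0 = I @ [Suc i]") (simp add: tensor_top_def, simp add: algebra_simps)
  next
    case 3
    have sign: "(-1::K) ^ (par m i * par m (Suc i)) * ((-1) ^ par m (Suc i) * qi m (Suc i))
        = odd_sign m i (Suc i) * wt_F m i (Suc i)"
      by (auto simp: par_def odd_sign_def wt_F_def)
    from 3 show ?thesis unfolding lhs wt_K_vcoeff_rhoF_snoc exchange_top_def IH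
      using sign by (simp add: wt_K_def algebra_simps)
  qed (unfold lhs wt_K_vcoeff_rhoF_snoc exchange_top_def IH,
    use neg_one_pow_par_Suc[of m i a] in \<open>simp_all add: wt_K_def wt_F_def algebra_simps\<close>)
qed

section \<open>The identities on V^{\<otimes>d}\<close>

definition letters_in :: "nat set \<Rightarrow> texpr \<Rightarrow> bool" where
  "letters_in S X \<longleftrightarrow> (\<forall>(c, J, w) \<in> set X. set J \<subseteq> S)"

lemma letters_in_tmul: "letters_in S x \<Longrightarrow> letters_in S y \<Longrightarrow> letters_in S (tmul x y)"
  unfolding letters_in_def tmul_def by fastforce

lemma letters_in_foldr_tmul:
  "(\<forall>x \<in> set xs. letters_in S x) \<Longrightarrow> letters_in S y \<Longrightarrow> letters_in S (foldr tmul xs y)"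
  by (induction xs) (auto intro: letters_in_tmul)

lemma letters_in_L_dual_basis:
  assumes "set I \<subseteq> S"
  shows "letters_in S (L_dual_basis m j I [])"
proof -
  have "letters_in S (L_dual_term m j I k)" for k
  proof -
    have "\<forall>x \<in> set (rev (map (gj j) (drop k I)) @ rev (map (fj m j) (take (k - 1) I))). letters_in S x"
      using assms by (auto simp: letters_in_def gj_def fj_def subset_iff split: if_splits
          dest!: in_set_dropD in_set_takeD)
    then have "letters_in S (foldr tmul (rev (map (gj j) (drop k I)) @ rev (map (fj m j) (take (k - 1) I)))
        [(1, [], [])])"
      by (rule letters_in_foldr_tmul) (simp add: letters_in_def)
    then show ?thesis by (auto simp: L_dual_term_def letters_in_def tscale_def)
  qed
  then show ?thesis unfolding L_dual_basis_conv by (fastforce simp: letters_in_def)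
qed

lemma L_dual_emb: "L_dual m j (emb v) = concat (map (\<lambda>(c, I). tscale c (L_dual_basis m j I [])) v)"
  by (induction v) (auto simp: L_dual_def emb_def tscale_def)

lemma top_coeff_L_dual_emb:
  "top_coeff m l (L_dual m j (emb v)) K0
    = sum_list (map (\<lambda>(c, I). c * top_coeff m l (L_dual_basis m j I []) K0) v)"
  unfolding L_dual_emb by (induction v) auto

lemma admissible_L_e_L_dual_emb:
  assumes "\<forall>(c, I) \<in> set v. set I \<subseteq> S" "l \<in> S"
  shows "admissible S (L_e l (L_dual m j (emb v)))"
  unfolding admissible_def L_e_conv
proof (intro ballI)
  fix y assume "y \<in> set (map (\<lambda>(c, J, w). (c, J @ [l], w)) (L_dual m j (emb v)))"
  then obtain c' c I J w where cI: "(c, I) \<in> set v" and y: "y = (c', J @ [l], w)"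
    and cJw: "(c', J, w) \<in> set (tscale c (L_dual_basis m j I []))"
    unfolding L_dual_emb by auto
  have "letters_in S (L_dual_basis m j I [])"
    using assms(1) cI by (auto intro: letters_in_L_dual_basis)
  with word_bounded_L_dual_basis[of m j I] cJw
  have "set J \<subseteq> S" "\<forall>t \<in> set w. 1 \<le> t \<and> t \<le> length J"
    by (auto simp: tscale_def letters_in_def word_bounded_def)
  then show "case y of (c, J, w) \<Rightarrow> set J \<subseteq> S \<and> (\<forall>t \<in> set w. 1 \<le> t \<and> t < length J)"
    using y assms(2) by auto
qed

lemma vcoeff_rho_tensors:
  "vcoeff (rho_tensors m ts v) K0
    = sum_list (map (\<lambda>(c, I). c * vcoeff (concat (map (\<lambda>t. apply_pure m t I) ts)) K0) v)"
  by (induction v) (auto simp: rho_tensors_def vcoeff_concat vcoeff_scale map_concat o_def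
      case_prod_beta sum_list_const_mult)

lemma rho_tensors_DeltaKinv:
  "\<forall>(c, I) \<in> set v. length I = d \<Longrightarrow>
    rho_tensors m (DeltaKinv m i d) v = map (\<lambda>(c, I). (c * prod_list (map (wt_Kinv m i) I), I)) v"
proof (induction v)
  case Nil
  then show ?case by (simp add: rho_tensors_def)
next
  case (Cons a v)
  obtain c I where a: "a = (c, I)" by (cases a)
  have "apply_pure m (replicate (length I) (False, opKinv m i)) I = [(prod_list (map (wt_Kinv m i) I), I)]"
    by (rule apply_pure_replicate_diag) (simp add: opKinv_def wt_Kinv_def)
  then show ?case using Cons a by (auto simp: rho_tensors_def DeltaKinv_def)
qed

lemma vcoeff_rho_tensors_DeltaK:
  "\<forall>(c, J) \<in> set X. length J = d \<Longrightarrow>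
    vcoeff (rho_tensors m (DeltaK m i d) X) K0 = prod_list (map (wt_K m i) K0) * vcoeff X K0"
proof (induction X)
  case Nil
  then show ?case by (simp add: rho_tensors_def)
next
  case (Cons a X)
  obtain c J where a: "a = (c, J)" by (cases a)
  have "apply_pure m (replicate (length J) (False, opK m i)) J = [(prod_list (map (wt_K m i) J), J)]"
    by (rule apply_pure_replicate_diag) (simp add: opK_def wt_K_def)
  then have "rho_tensors m (DeltaK m i d) (a # X)
      = (c * prod_list (map (wt_K m i) J), J) # rho_tensors m (DeltaK m i d) X"
    using Cons.prems a by (simp add: rho_tensors_def DeltaK_def)
  then show ?case using Cons a by (auto simp: algebra_simps)
qed

lemma teq_L_e_L_dual_EKinv:
  assumes "\<forall>(c, I) \<in> set v. length I = d \<and> set I \<subseteq> {1..m + n}" "i \<in> {1..m + n}"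
  shows "teq m n (L_e i (L_dual m (i + 1) (emb v))) (emb (rho_EKinv m i d v))"
proof (rule teq_emb_if_normal_form)
  show "admissible {1..m + n} (L_e i (L_dual m (i + 1) (emb v)))"
    using assms by (intro admissible_L_e_L_dual_emb) auto
  fix J
  have "vcoeff (normal_form m (L_e i (L_dual m (i + 1) (emb v)))) J
      = sum_list (map (\<lambda>(c, I). c * (prod_list (map (wt_Kinv m i) I) * vcoeff (rhoE m i I) J)) v)"
    by (simp add: vcoeff_normal_form_L_e top_coeff_L_dual_emb top_coeff_L_dual_basis_E)
  also have "\<dots> = sum_list (map (\<lambda>(c, I). c * vcoeff (concat (map (\<lambda>t. apply_pure m t I) (DeltaE m i d))) J)
      (map (\<lambda>(c, I). (c * prod_list (map (wt_Kinv m i) I), I)) v))"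
    unfolding map_map o_def
    by (rule arg_cong[where f = sum_list], rule map_cong) (use assms(1) in \<open>auto simp: rhoE_def\<close>)
  also have "\<dots> = vcoeff (rho_EKinv m i d v) J"
  proof -
    have "\<forall>(c, I) \<in> set v. length I = d" using assms(1) by auto
    then show ?thesis by (simp only: rho_EKinv_def rho_tensors_DeltaKinv vcoeff_rho_tensors)
  qed
  finally show "vcoeff (normal_form m (L_e i (L_dual m (i + 1) (emb v)))) J = vcoeff (rho_EKinv m i d v) J" .
qed

lemma teq_L_e_L_dual_KF:
  assumes "\<forall>(c, I) \<in> set v. length I = d \<and> set I \<subseteq> {1..m + n}" "i + 1 \<in> {1..m + n}"
  shows "teq m n (L_e (i + 1) (L_dual m i (emb v))) (emb (rho_KF m i d v))"
proof (rule teq_emb_if_normal_form)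
  show "admissible {1..m + n} (L_e (i + 1) (L_dual m i (emb v)))"
    using assms by (intro admissible_L_e_L_dual_emb) auto
  fix J
  have "vcoeff (normal_form m (L_e (i + 1) (L_dual m i (emb v)))) J
      = sum_list (map (\<lambda>(c, I). c * (prod_list (map (wt_K m i) J) * vcoeff (rhoF m i I) J)) v)"
    by (simp add: vcoeff_normal_form_L_e top_coeff_L_dual_emb top_coeff_L_dual_basis_F)
  also have "\<dots> = prod_list (map (wt_K m i) J)
      * sum_list (map (\<lambda>(c, I). c * vcoeff (concat (map (\<lambda>t. apply_pure m t I) (DeltaF m i d))) J) v)"
    unfolding sum_list_const_mult[symmetric]
    by (rule arg_cong[where f = sum_list], rule map_cong)
      (use assms(1) in \<open>auto simp: rhoF_def algebra_simps\<close>)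
  also have "\<dots> = vcoeff (rho_KF m i d v) J"
  proof -
    have "\<forall>(c, K) \<in> set (rho_tensors m (DeltaF m i d) v). length K = d"
      using assms(1) by (auto simp: rho_tensors_def dest!: length_apply_pure)
    then have "vcoeff (rho_KF m i d v) J
        = prod_list (map (wt_K m i) J) * vcoeff (rho_tensors m (DeltaF m i d) v) J"
      unfolding rho_KF_def by (rule vcoeff_rho_tensors_DeltaK)
    then show ?thesis by (simp only: vcoeff_rho_tensors)
  qed
  finally show "vcoeff (normal_form m (L_e (i + 1) (L_dual m i (emb v)))) J = vcoeff (rho_KF m i d v) J" .
qed

theorem lemma6p5:
  fixes m n i d :: nat and v :: vexpr
  assumes "1 \<le> m" and "1 \<le> n" and "1 \<le> i" and "i < m + n" and "1 \<le> d"
    and "\<forall>(c, I) \<in> set v. length I = d \<and> set I \<subseteq> {1..m + n}"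
  shows "teq m n (L_e i (L_dual m (i + 1) (emb v))) (emb (rho_EKinv m i d v))
       \<and> teq m n (L_e (i + 1) (L_dual m i (emb v))) (emb (rho_KF m i d v))"
proof
  show "teq m n (L_e i (L_dual m (i + 1) (emb v))) (emb (rho_EKinv m i d v))"
    using assms(3,4,6) by (intro teq_L_e_L_dual_EKinv) auto
  show "teq m n (L_e (i + 1) (L_dual m i (emb v))) (emb (rho_KF m i d v))"
    using assms(3,4,6) by (intro teq_L_e_L_dual_KF) auto
qed

end
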